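(* Let $L$ be one of the logics $\mathsf{MN}$, $\mathsf{MNF}$, $\mathsf{MNP}$, $\mathsf{MND}$, $\mathsf{MNPF}$, $\mathsf{MNDF}$. Then for any modal formula $A$ the following are equivalent: (1) $L\vdash A$; (2) $A$ is valid in all $L$-frames; (3) $A$ is valid in all finite $L$-frames.
   Context: The modal language has countably many propositional variables, $\bot$, $\to$ and $\Box$, with the other connectives as abbreviations. $\mathsf{MN}$ is the logic whose axioms are all propositional tautologies in this language and whose rules are modus ponens, necessitation ($A / \Box A$) and monotonicity RM ($A\to B / \Box A\to\Box B$). $\mathsf{MNP}$ is $\mathsf{MN}$ plus the axiom scheme $\neg\Box\bot$; $\mathsf{MND}$ is $\mathsf{MN}$ plus the scheme $\neg(\Box A\land\Box\neg A)$; $\mathsf{MNF}$, $\mathsf{MNPF}$, $\mathsf{MNDF}$ are obtained from $\mathsf{MN}$, $\mathsf{MNP}$, $\mathsf{MND}$ respectively by adding the scheme $\Box A\to\Box\Box A$. An $\mathsf{MN}$-frame is a pair $(W,\prec)$ where $W$ is a non-empty set and $\prec$ is a relation between elements of $W$ and non-empty subsets of $W$ such that $x\prec V$ and $V\subseteq U\subseteq W$ imply $x\prec U$. A satisfaction relation $\Vdash$ on it obeys the usual Boolean clauses and: $x\Vdash\Box A$ iff for every $V$ with $x\prec V$ some $y\in V$ has $y\Vdash A$. $A$ is valid in a frame if it holds at every point under every satisfaction relation. The frame is transitive if whenever $x\prec V$ and $y\prec U_y$ for each $y\in V$, then $x\prec\bigcup_{y\in V}U_y$; it is an $\mathsf{MNP}$-frame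 if every $x$ has some $V$ with $x\prec V$; it is an $\mathsf{MND}$-frame if for all $x\in W$, $V\subseteq W$: $x\prec V$ or $x\prec W\setminus V$. The $\mathsf{MN}$-, $\mathsf{MNP}$-, $\mathsf{MND}$-frames are as just defined; $\mathsf{MNF}$-, $\mathsf{MNPF}$-, $\mathsf{MNDF}$-frames are respectively the transitive $\mathsf{MN}$-, $\mathsf{MNP}$-, $\mathsf{MND}$-frames. A frame is finite if $W$ is finite. *)

theory Defs
  imports Main
begin

datatype fm = Var nat | Bot | Imp fm fm | Box fm

definition Neg :: "fm \<Rightarrow> fm" where "Neg A = Imp A Bot"
definition Conj :: "fm \<Rightarrow> fm \<Rightarrow> fm" where "Conj A B = Neg (Imp A (Neg B))"

fun peval :: "(fm \<Rightarrow> bool) \<Rightarrow> fm \<Rightarrow> bool" where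
  "peval v (Var n) = v (Var n)"
| "peval v Bot = False"
| "peval v (Imp A B) = (peval v A \<longrightarrow> peval v B)"
| "peval v (Box A) = v (Box A)"

definition tautology :: "fm \<Rightarrow> bool" where
  "tautology A = (\<forall>v. peval v A)"

datatype logic = MN | MNF | MNP | MND | MNPF | MNDF

definition hasP :: "logic \<Rightarrow> bool" where "hasP L = (L = MNP \<or> L = MNPF)"
definition hasD :: "logic \<Rightarrow> bool" where "hasD L = (L = MND \<or> L = MNDF)"
definition hasF :: "logic \<Rightarrow> bool" where "hasF L = (L = MNF \<or> L = MNPF \<or> L = MNDF)"

inductive prov :: "logic \<Rightarrow> fm \<Rightarrow> bool" for L where
  taut: "tautology A \<Longrightarrow> prov L A"
| axP: "hasP L \<Longrightarrow> prov L (Neg (Box Bot))"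
| axD: "hasD L \<Longrightarrow> prov L (Neg (Conj (Box A) (Box (Neg A))))"
| axF: "hasF L \<Longrightarrow> prov L (Imp (Box A) (Box (Box A)))"
| mp: "prov L (Imp A B) \<Longrightarrow> prov L A \<Longrightarrow> prov L B"
| nec: "prov L A \<Longrightarrow> prov L (Box A)"
| rm: "prov L (Imp A B) \<Longrightarrow> prov L (Imp (Box A) (Box B))"

definition mn_frame :: "'w set \<Rightarrow> ('w \<Rightarrow> 'w set \<Rightarrow> bool) \<Rightarrow> bool" where
  "mn_frame W R \<longleftrightarrow> W \<noteq> {}
     \<and> (\<forall>x V. R x V \<longrightarrow> x \<in> W \<and> V \<noteq> {} \<and> V \<subseteq> W)
     \<and> (\<forall>x V U. R x V \<and> V \<subseteq> U \<and> U \<subseteq> W \<longrightarrow> R x U)"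

definition transitive_frame :: "'w set \<Rightarrow> ('w \<Rightarrow> 'w set \<Rightarrow> bool) \<Rightarrow> bool" where
  "transitive_frame W R \<longleftrightarrow>
     (\<forall>x V Us. R x V \<and> (\<forall>y\<in>V. R y (Us y)) \<longrightarrow> R x (\<Union>y\<in>V. Us y))"

definition P_frame :: "'w set \<Rightarrow> ('w \<Rightarrow> 'w set \<Rightarrow> bool) \<Rightarrow> bool" where
  "P_frame W R \<longleftrightarrow> (\<forall>x\<in>W. \<exists>V. R x V)"

definition D_frame :: "'w set \<Rightarrow> ('w \<Rightarrow> 'w set \<Rightarrow> bool) \<Rightarrow> bool" where
  "D_frame W R \<longleftrightarrow> (\<forall>x\<in>W. \<forall>V. V \<subseteq> W \<longrightarrow> R x V \<or> R x (W - V))"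

definition L_frame :: "logic \<Rightarrow> 'w set \<Rightarrow> ('w \<Rightarrow> 'w set \<Rightarrow> bool) \<Rightarrow> bool" where
  "L_frame L W R \<longleftrightarrow> mn_frame W R
     \<and> (hasP L \<longrightarrow> P_frame W R)
     \<and> (hasD L \<longrightarrow> D_frame W R)
     \<and> (hasF L \<longrightarrow> transitive_frame W R)"

fun sat :: "('w \<Rightarrow> 'w set \<Rightarrow> bool) \<Rightarrow> (nat \<Rightarrow> 'w set) \<Rightarrow> 'w \<Rightarrow> fm \<Rightarrow> bool" where
  "sat R Val x (Var n) = (x \<in> Val n)"
| "sat R Val x Bot = False"
| "sat R Val x (Imp A B) = (sat R Val x A \<longrightarrow> sat R Val x B)"
| "sat R Val x (Box A) = (\<forall>V. R x V \<longrightarrow> (\<exists>y\<in>V. sat R Val y A))"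

definition valid_in :: "'w set \<Rightarrow> ('w \<Rightarrow> 'w set \<Rightarrow> bool) \<Rightarrow> fm \<Rightarrow> bool" where
  "valid_in W R A \<longleftrightarrow> (\<forall>Val. \<forall>x\<in>W. sat R Val x A)"

end

(* For completeness, a non-theorem A is refuted in a finite
   canonical model: its worlds are the maximal L-consistent sets of subformulas of A, and a world
   G has as neighbourhoods exactly the nonempty sets of worlds that meet C for every Box C in G
   (and also meet Box C when L contains axiom 4). Since the condition is existential, these
   neighbourhoods are upward closed; axioms P, D and 4 give the corresponding frame conditions,
   and monotonicity yields the truth lemma. A finite countermodel can then be copied injectively
   into any infinite type of points. *)

theory Submission
  imports Defs
begin

lemma peval_Neg [simp]: "peval v (Neg A) \<longleftrightarrow> \<not> peval v A"
  by (simp add: Neg_def)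

lemma peval_Conj [simp]: "peval v (Conj A B) \<longleftrightarrow> peval v A \<and> peval v B"
  by (simp add: Conj_def)

lemma sat_Neg [simp]: "sat R Val x (Neg A) \<longleftrightarrow> \<not> sat R Val x A"
  by (simp add: Neg_def)

lemma sat_Conj [simp]: "sat R Val x (Conj A B) \<longleftrightarrow> sat R Val x A \<and> sat R Val x B"
  by (simp add: Conj_def)

lemma peval_sat: "peval (sat R Val x) A \<longleftrightarrow> sat R Val x A"
  by (induction A) auto

subsection \<open>Soundness\<close>

lemma valid_in_tautology: "tautology A \<Longrightarrow> valid_in W R A"
  unfolding valid_in_def tautology_def by (metis peval_sat)

lemma valid_in_axD: "D_frame W R \<Longrightarrow> valid_in W R (Neg (Conj (Box A) (Box (Neg A))))"
  unfolding valid_in_def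
proof (intro allI ballI)
  fix Val x
  assume "D_frame W R" and "x \<in> W"
  then have "R x {y\<in>W. sat R Val y A} \<or> R x (W - {y\<in>W. sat R Val y A})"
    unfolding D_frame_def by simp
  moreover have "W - {y\<in>W. sat R Val y A} = {y\<in>W. \<not> sat R Val y A}"
    by blast
  ultimately show "sat R Val x (Neg (Conj (Box A) (Box (Neg A))))"
    by auto
qed

lemma valid_in_axF:
  "transitive_frame W R \<Longrightarrow> valid_in W R (Imp (Box A) (Box (Box A)))"
  unfolding valid_in_def
proof (intro allI ballI)
  fix Val x
  assume trans: "transitive_frame W R"
  show "sat R Val x (Imp (Box A) (Box (Box A)))"
  proof (simp only: sat.simps, intro impI allI, rule ccontr)
    fix V
    assume boxA: "\<forall>V. R x V \<longrightarrow> (\<exists>y\<in>V. sat R Val y A)" and "R x V"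
      and "\<not> (\<exists>y\<in>V. \<forall>U. R y U \<longrightarrow> (\<exists>z\<in>U. sat R Val z A))"
    then obtain Us where Us: "\<forall>y\<in>V. R y (Us y) \<and> (\<forall>z\<in>Us y. \<not> sat R Val z A)"
      by metis
    with \<open>R x V\<close> trans have "R x (\<Union>y\<in>V. Us y)"
      unfolding transitive_frame_def by blast
    with boxA Us show False
      by blast
  qed
qed

lemma valid_in_nec:
  assumes "mn_frame W R" and "valid_in W R A"
  shows "valid_in W R (Box A)"
  unfolding valid_in_def
proof (intro allI ballI)
  fix Val x
  have "\<exists>y\<in>V. sat R Val y A" if "R x V" for V
  proof -
    from that \<open>mn_frame W R\<close> obtain y where "y \<in> V" "y \<in> W"
      unfolding mn_frame_def by blast
    with \<open>valid_in W R A\<close> show ?thesis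
      unfolding valid_in_def by blast
  qed
  then show "sat R Val x (Box A)"
    by simp
qed

lemma valid_in_rm:
  assumes "mn_frame W R" and "valid_in W R (Imp A B)"
  shows "valid_in W R (Imp (Box A) (Box B))"
  unfolding valid_in_def
proof (intro allI ballI)
  fix Val x
  have "\<exists>y\<in>V. sat R Val y B" if "\<exists>y\<in>V. sat R Val y A" and "R x V" for V
  proof -
    from that obtain y where "y \<in> V" "sat R Val y A"
      by blast
    moreover from \<open>R x V\<close> \<open>mn_frame W R\<close> have "V \<subseteq> W"
      unfolding mn_frame_def by blast
    ultimately show ?thesis
      using \<open>valid_in W R (Imp A B)\<close> unfolding valid_in_def by auto
  qed
  then show "sat R Val x (Imp (Box A) (Box B))"
    by simp
qed

theorem soundness: "prov L A \<Longrightarrow> L_frame L W R \<Longrightarrow> valid_in W R A"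
proof (induction rule: prov.induct)
  case (taut A)
  then show ?case by (simp add: valid_in_tautology)
next
  case axP
  then show ?case by (auto simp: valid_in_def L_frame_def P_frame_def)
next
  case (axD A)
  then show ?case by (simp add: L_frame_def valid_in_axD)
next
  case (axF A)
  then show ?case by (simp add: L_frame_def valid_in_axF)
next
  case (mp A B)
  then show ?case by (auto simp: valid_in_def)
next
  case (nec A)
  then show ?case by (simp add: L_frame_def valid_in_nec)
next
  case (rm A B)
  then show ?case by (simp add: L_frame_def valid_in_rm)
qed

subsection \<open>Consistency and Lindenbaum's lemma\<close>

lemma prov_tautI: "(\<And>v. peval v A) \<Longrightarrow> prov L A"
  by (rule prov.taut) (simp add: tautology_def)

lemma prov_taut_consequence: "prov L A \<Longrightarrow> (\<And>v. peval v A \<Longrightarrow> peval v B) \<Longrightarrow> prov L B"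
  by (metis prov.mp prov_tautI peval.simps(3))

lemma prov_taut_consequence2:
  assumes "prov L A" and "prov L B" and "\<And>v. peval v A \<Longrightarrow> peval v B \<Longrightarrow> peval v C"
  shows "prov L C"
proof -
  have "prov L (Imp A (Imp B C))"
    using assms(3) by (intro prov_tautI) simp
  with assms(1,2) show ?thesis
    by (meson prov.mp)
qed

definition consistent :: "logic \<Rightarrow> fm \<Rightarrow> bool" where
  "consistent L A \<longleftrightarrow> \<not> prov L (Neg A)"

lemma consistent_satisfiable: "consistent L A \<Longrightarrow> \<exists>v. peval v A"
  using prov_tautI[of "Neg A" L] by (auto simp: consistent_def)

lemma consistent_mono: "consistent L A \<Longrightarrow> (\<And>v. peval v A \<Longrightarrow> peval v B) \<Longrightarrow> consistent L B"
  unfolding consistent_def using prov_taut_consequence[of L "Neg B" "Neg A"] by auto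

lemma consistent_Conj_cases:
  "consistent L A \<Longrightarrow> consistent L (Conj A B) \<or> consistent L (Conj A (Neg B))"
  unfolding consistent_def
  using prov_taut_consequence2[of L "Neg (Conj A B)" "Neg (Conj A (Neg B))" "Neg A"] by auto

lemma consistent_Conj_Neg_if_not_prov_Box:
  assumes "prov L (Imp D (Box C))" and "\<not> prov L (Imp D (Box B))"
  shows "consistent L (Conj C (Neg B))"
proof (rule ccontr)
  assume "\<not> consistent L (Conj C (Neg B))"
  then have "prov L (Neg (Conj C (Neg B)))"
    unfolding consistent_def by simp
  then have "prov L (Imp C B)"
    by (rule prov_taut_consequence) simp
  then have "prov L (Imp (Box C) (Box B))"
    by (rule prov.rm)
  with assms(1) have "prov L (Imp D (Box B))"
    by (rule prov_taut_consequence2) simp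
  with assms(2) show False ..
qed

lemma prov_Imp_Box_Neg_Bot: "prov L (Imp A (Box (Neg Bot)))"
proof -
  have "prov L (Box (Neg Bot))"
    by (intro prov.nec prov_tautI) simp
  then show ?thesis
    by (rule prov_taut_consequence) simp
qed

fun char_conj :: "fm list \<Rightarrow> fm set \<Rightarrow> fm" where
  "char_conj [] G = Neg Bot"
| "char_conj (p # ps) G = Conj (if p \<in> G then p else Neg p) (char_conj ps G)"

lemma peval_char_conj: "peval v (char_conj ps G) \<longleftrightarrow> (\<forall>q\<in>set ps. peval v q \<longleftrightarrow> q \<in> G)"
  by (induction ps) auto

lemma lindenbaum: "consistent L D \<Longrightarrow> \<exists>G. consistent L (Conj D (char_conj ps G))"
proof (induction ps arbitrary: D)
  case Nil
  then show ?case
    by (auto elim: consistent_mono)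
next
  case (Cons p ps)
  from consistent_Conj_cases[OF Cons.prems, of p] show ?case
  proof
    assume "consistent L (Conj D p)"
    then obtain G where "consistent L (Conj (Conj D p) (char_conj ps G))"
      using Cons.IH by blast
    then have "consistent L (Conj D (char_conj (p # ps) (insert p G)))"
      by (rule consistent_mono) (auto simp: peval_char_conj)
    then show ?thesis ..
  next
    assume "consistent L (Conj D (Neg p))"
    then obtain G where "consistent L (Conj (Conj D (Neg p)) (char_conj ps G))"
      using Cons.IH by blast
    then have "consistent L (Conj D (char_conj (p # ps) (G - {p})))"
      by (rule consistent_mono) (auto simp: peval_char_conj)
    then show ?thesis ..
  qed
qed

subsection \<open>The finite canonical model\<close>

locale canonical_model =
  fixes L :: logic and ps :: "fm list"
  assumes Imp_closed: "Imp B C \<in> set ps \<Longrightarrow> B \<in> set ps \<and> C \<in> set ps"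
    and Box_closed: "Box B \<in> set ps \<Longrightarrow> B \<in> set ps"
begin

text \<open>A world \<open>G\<close> stands for the maximal consistent subset \<open>G \<union> {Neg q | q. q \<in> set ps - G}\<close>
  of \<open>set ps\<close> and its negations.\<close>
definition worlds :: "fm set set" where
  "worlds = {G. G \<subseteq> set ps \<and> consistent L (char_conj ps G)}"

text \<open>The clause for \<open>hasF L\<close> makes the frame transitive; \<open>nbhd_avoiding\<close> survives it
  thanks to axiom 4.\<close>
definition nbhd :: "fm set \<Rightarrow> fm set set \<Rightarrow> bool" where
  "nbhd G V \<longleftrightarrow> G \<in> worlds \<and> V \<noteq> {} \<and> V \<subseteq> worlds \<and>
     (\<forall>C. Box C \<in> G \<longrightarrow> (\<exists>y\<in>V. C \<in> y) \<and> (hasF L \<longrightarrow> (\<exists>y\<in>V. Box C \<in> y)))"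

definition val :: "nat \<Rightarrow> fm set set" where
  "val n = {G. Var n \<in> G}"

definition truths :: "(fm \<Rightarrow> bool) \<Rightarrow> fm set" where
  "truths v = {q \<in> set ps. peval v q}"

lemma mem_truths [simp]: "q \<in> set ps \<Longrightarrow> q \<in> truths v \<longleftrightarrow> peval v q"
  by (simp add: truths_def)

lemma finite_worlds: "finite worlds"
  by (rule finite_subset[of _ "Pow (set ps)"]) (auto simp: worlds_def)

lemma world_eq_truths: "G \<in> worlds \<Longrightarrow> \<exists>v. G = truths v"
proof -
  assume "G \<in> worlds"
  then obtain v where "peval v (char_conj ps G)" and "G \<subseteq> set ps"
    unfolding worlds_def using consistent_satisfiable by blast
  then have "G = truths v"
    unfolding truths_def peval_char_conj by blast
  then show ?thesis
    by blast
qed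

lemma consistent_satisfiable_in_world: "consistent L D \<Longrightarrow> \<exists>v. peval v D \<and> truths v \<in> worlds"
proof -
  assume "consistent L D"
  then obtain G where G: "consistent L (Conj D (char_conj ps G))"
    using lindenbaum by blast
  then obtain v where v: "peval v (Conj D (char_conj ps G))"
    using consistent_satisfiable by blast
  from G have "consistent L (char_conj ps (truths v))"
    by (rule consistent_mono) (use v in \<open>auto simp: peval_char_conj\<close>)
  then have "truths v \<in> worlds"
    by (simp add: worlds_def truths_def)
  with v show ?thesis
    by auto
qed

lemma world_prov_iff:
  assumes "G \<in> worlds" and "X \<in> set ps"
  shows "prov L (Imp (char_conj ps G) X) \<longleftrightarrow> X \<in> G"
proof
  assume prov_X: "prov L (Imp (char_conj ps G) X)"
  show "X \<in> G"
  proof (rule ccontr)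
    assume "X \<notin> G"
    with assms(2) have "prov L (Neg (char_conj ps G))"
      by (intro prov_taut_consequence[OF prov_X]) (auto simp: peval_char_conj)
    with \<open>G \<in> worlds\<close> show False
      by (simp add: worlds_def consistent_def)
  qed
next
  assume "X \<in> G"
  with assms(2) show "prov L (Imp (char_conj ps G) X)"
    by (intro prov_tautI) (auto simp: peval_char_conj)
qed

lemma world_not_prov_Bot: "G \<in> worlds \<Longrightarrow> \<not> prov L (Imp (char_conj ps G) Bot)"
  by (simp add: worlds_def consistent_def Neg_def)

lemma nbhd_avoiding:
  assumes G: "G \<in> worlds" and "Box B \<in> set ps" and "Box B \<notin> G"
  shows "nbhd G {y \<in> worlds. B \<notin> y}"
proof -
  have B: "B \<in> set ps"
    using Box_closed assms(2) by blast
  have not_prov: "\<not> prov L (Imp (char_conj ps G) (Box B))"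
    using world_prov_iff assms by blast
  have avoid: "\<exists>v. truths v \<in> worlds \<and> B \<notin> truths v \<and> peval v C"
    if prov_C: "prov L (Imp (char_conj ps G) (Box C))" for C
  proof -
    obtain v where "peval v (Conj C (Neg B))" and "truths v \<in> worlds"
      using consistent_satisfiable_in_world consistent_Conj_Neg_if_not_prov_Box[OF prov_C not_prov]
      by blast
    with B show ?thesis
      by auto
  qed
  have "{y \<in> worlds. B \<notin> y} \<noteq> {}"
    using avoid[OF prov_Imp_Box_Neg_Bot] by blast
  moreover have "\<exists>y\<in>worlds. B \<notin> y \<and> C \<in> y" if "Box C \<in> G" for C
  proof -
    from that G have "Box C \<in> set ps"
      by (auto simp: worlds_def)
    with that G have "C \<in> set ps" and "prov L (Imp (char_conj ps G) (Box C))"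
      using Box_closed world_prov_iff by blast+
    with avoid show ?thesis
      by fastforce
  qed
  moreover have "\<exists>y\<in>worlds. B \<notin> y \<and> Box C \<in> y" if "Box C \<in> G" and "hasF L" for C
  proof -
    from that G have "Box C \<in> set ps"
      by (auto simp: worlds_def)
    moreover from that G this have "prov L (Imp (char_conj ps G) (Box C))"
      using world_prov_iff by blast
    then have "prov L (Imp (char_conj ps G) (Box (Box C)))"
      using prov.axF[OF \<open>hasF L\<close>, of C] by (rule prov_taut_consequence2) simp
    ultimately show ?thesis
      using avoid by fastforce
  qed
  ultimately show ?thesis
    using G by (auto simp: nbhd_def)
qed

lemma truth_lemma: "B \<in> set ps \<Longrightarrow> G \<in> worlds \<Longrightarrow> sat nbhd val G B \<longleftrightarrow> B \<in> G"
proof (induction B arbitrary: G)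
  case (Var n)
  then show ?case
    by (simp add: val_def)
next
  case Bot
  then show ?case
    using world_eq_truths by fastforce
next
  case (Imp B C)
  then have "B \<in> set ps" "C \<in> set ps"
    using Imp_closed by blast+
  with Imp show ?case
    using world_eq_truths by fastforce
next
  case (Box B)
  then have "B \<in> set ps"
    using Box_closed by blast
  show ?case
  proof
    assume "sat nbhd val G (Box B)"
    show "Box B \<in> G"
    proof (rule ccontr)
      assume "Box B \<notin> G"
      with Box.prems have "nbhd G {y \<in> worlds. B \<notin> y}"
        by (intro nbhd_avoiding)
      with \<open>sat nbhd val G (Box B)\<close> obtain y where "y \<in> worlds" "B \<notin> y" "sat nbhd val y B"
        by auto
      with Box.IH \<open>B \<in> set ps\<close> show False
        by blast
    qed
  next
    assume "Box B \<in> G"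
    then have "\<exists>y\<in>V. sat nbhd val y B" if "nbhd G V" for V
      using that Box.IH \<open>B \<in> set ps\<close> unfolding nbhd_def by blast
    then show "sat nbhd val G (Box B)"
      by simp
  qed
qed

lemma nbhd_mono: "nbhd G V \<Longrightarrow> V \<subseteq> U \<Longrightarrow> U \<subseteq> worlds \<Longrightarrow> nbhd G U"
  unfolding nbhd_def by (meson subset_empty subsetD)

lemma mn_frame_canonical:
  assumes "worlds \<noteq> {}"
  shows "mn_frame worlds nbhd"
proof -
  have "nbhd G V \<longrightarrow> G \<in> worlds \<and> V \<noteq> {} \<and> V \<subseteq> worlds" for G V
    by (simp add: nbhd_def)
  with assms nbhd_mono show ?thesis
    unfolding mn_frame_def by blast
qed

lemma not_nbhd_obstruction:
  assumes G: "G \<in> worlds" and "V \<subseteq> worlds" and "\<not> nbhd G V"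
  shows "\<exists>D. prov L (Imp (char_conj ps G) (Box D)) \<and> (\<forall>v. truths v \<in> V \<longrightarrow> \<not> peval v D)"
proof (cases "V = {}")
  case True
  then show ?thesis
    using prov_Imp_Box_Neg_Bot by blast
next
  case False
  with assms obtain C where "Box C \<in> G"
    and C_missed: "(\<forall>y\<in>V. C \<notin> y) \<or> (hasF L \<and> (\<forall>y\<in>V. Box C \<notin> y))"
    unfolding nbhd_def by auto
  moreover from \<open>Box C \<in> G\<close> G have "Box C \<in> set ps"
    by (auto simp: worlds_def)
  ultimately have "C \<in> set ps" and prov_C: "prov L (Imp (char_conj ps G) (Box C))"
    using Box_closed world_prov_iff G by blast+
  from C_missed show ?thesis
  proof
    assume "\<forall>y\<in>V. C \<notin> y"
    with \<open>C \<in> set ps\<close> have "\<forall>v. truths v \<in> V \<longrightarrow> \<not> peval v C"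
      by auto
    with prov_C show ?thesis
      by blast
  next
    assume "hasF L \<and> (\<forall>y\<in>V. Box C \<notin> y)"
    with \<open>Box C \<in> set ps\<close> have "\<forall>v. truths v \<in> V \<longrightarrow> \<not> peval v (Box C)"
      by auto
    moreover from \<open>hasF L \<and> _\<close> have "prov L (Imp (Box C) (Box (Box C)))"
      by (simp add: prov.axF)
    with prov_C have "prov L (Imp (char_conj ps G) (Box (Box C)))"
      by (rule prov_taut_consequence2) simp
    ultimately show ?thesis
      by blast
  qed
qed

lemma P_frame_canonical:
  assumes "hasP L"
  shows "P_frame worlds nbhd"
  unfolding P_frame_def
proof
  fix G
  assume G: "G \<in> worlds"
  have "nbhd G worlds"
  proof (rule ccontr)
    assume "\<not> nbhd G worlds"
    then obtain D where prov_D: "prov L (Imp (char_conj ps G) (Box D))"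
      and "\<forall>v. truths v \<in> worlds \<longrightarrow> \<not> peval v D"
      using not_nbhd_obstruction[OF G] by blast
    then have "prov L (Imp D Bot)"
      using consistent_satisfiable_in_world by (auto simp: consistent_def Neg_def)
    then have "prov L (Imp (Box D) (Box Bot))"
      by (rule prov.rm)
    with prov.axP[OF assms] have "prov L (Neg (Box D))"
      by (rule prov_taut_consequence2) simp
    with prov_D have "prov L (Imp (char_conj ps G) Bot)"
      by (rule prov_taut_consequence2) simp
    with G show False
      using world_not_prov_Bot by blast
  qed
  then show "\<exists>V. nbhd G V" ..
qed

lemma D_frame_canonical:
  assumes "hasD L"
  shows "D_frame worlds nbhd"
  unfolding D_frame_def
proof (intro ballI allI impI)
  fix G V
  assume G: "G \<in> worlds" and V: "V \<subseteq> worlds"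
  show "nbhd G V \<or> nbhd G (worlds - V)"
  proof (rule ccontr)
    assume "\<not> (nbhd G V \<or> nbhd G (worlds - V))"
    then obtain D1 D2 where prov_D1: "prov L (Imp (char_conj ps G) (Box D1))"
      and "\<forall>v. truths v \<in> V \<longrightarrow> \<not> peval v D1"
      and prov_D2: "prov L (Imp (char_conj ps G) (Box D2))"
      and "\<forall>v. truths v \<in> worlds - V \<longrightarrow> \<not> peval v D2"
      using not_nbhd_obstruction[OF G] V by (metis Diff_subset)
    then have "\<not> consistent L (Conj D1 D2)"
      using consistent_satisfiable_in_world by (metis DiffI peval_Conj)
    then have "prov L (Neg (Conj D1 D2))"
      unfolding consistent_def by simp
    then have "prov L (Imp D1 (Neg D2))"
      by (rule prov_taut_consequence) simp
    then have "prov L (Imp (Box D1) (Box (Neg D2)))"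
      by (rule prov.rm)
    with prov.axD[OF assms, of D2] have "prov L (Imp (Box D1) (Neg (Box D2)))"
      by (rule prov_taut_consequence2) auto
    with prov_D1 have "prov L (Imp (char_conj ps G) (Neg (Box D2)))"
      by (rule prov_taut_consequence2) simp
    with prov_D2 have "prov L (Imp (char_conj ps G) Bot)"
      by (rule prov_taut_consequence2) simp
    with G show False
      using world_not_prov_Bot by blast
  qed
qed

lemma transitive_frame_canonical:
  assumes "hasF L"
  shows "transitive_frame worlds nbhd"
  unfolding transitive_frame_def
proof (intro allI impI)
  fix G V Us
  assume "nbhd G V \<and> (\<forall>y\<in>V. nbhd y (Us y))"
  then have GV: "nbhd G V" and yUs: "\<forall>y\<in>V. nbhd y (Us y)"
    by blast+
  have "G \<in> worlds" and "(\<Union>y\<in>V. Us y) \<noteq> {}" and "(\<Union>y\<in>V. Us y) \<subseteq> worlds"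
    using GV yUs unfolding nbhd_def by fastforce+
  moreover have "(\<exists>z\<in>\<Union>y\<in>V. Us y. C \<in> z) \<and> (\<exists>z\<in>\<Union>y\<in>V. Us y. Box C \<in> z)"
    if "Box C \<in> G" for C
  proof -
    from GV that assms obtain y where "y \<in> V" and "Box C \<in> y"
      unfolding nbhd_def by blast
    with yUs have "nbhd y (Us y)"
      by blast
    with \<open>Box C \<in> y\<close> assms have "(\<exists>z\<in>Us y. C \<in> z) \<and> (\<exists>z\<in>Us y. Box C \<in> z)"
      unfolding nbhd_def by simp
    with \<open>y \<in> V\<close> show ?thesis
      by blast
  qed
  ultimately show "nbhd G (\<Union>y\<in>V. Us y)"
    unfolding nbhd_def by simp
qed

lemma L_frame_canonical: "worlds \<noteq> {} \<Longrightarrow> L_frame L worlds nbhd"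
  unfolding L_frame_def
  using mn_frame_canonical P_frame_canonical D_frame_canonical transitive_frame_canonical by blast

end

fun subfms :: "fm \<Rightarrow> fm list" where
  "subfms (Var n) = [Var n]"
| "subfms Bot = [Bot]"
| "subfms (Imp A B) = Imp A B # subfms A @ subfms B"
| "subfms (Box A) = Box A # subfms A"

lemma mem_subfms_self: "A \<in> set (subfms A)"
  by (cases A) auto

lemma subfms_trans: "B \<in> set (subfms A) \<Longrightarrow> set (subfms B) \<subseteq> set (subfms A)"
  by (induction A) auto

lemma canonical_model_subfms: "canonical_model (subfms A)"
proof
  show "B \<in> set (subfms A) \<and> C \<in> set (subfms A)" if "Imp B C \<in> set (subfms A)" for B C
    using subfms_trans[OF that] mem_subfms_self[of B] mem_subfms_self[of C] by auto
  show "B \<in> set (subfms A)" if "Box B \<in> set (subfms A)" for B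
    using subfms_trans[OF that] mem_subfms_self[of B] by auto
qed

theorem finite_countermodel:
  assumes "\<not> prov L A"
  shows "\<exists>(W :: fm set set) R. L_frame L W R \<and> finite W \<and> \<not> valid_in W R A"
proof -
  interpret canonical_model L "subfms A"
    by (rule canonical_model_subfms)
  have "consistent L (Neg A)"
    unfolding consistent_def
  proof
    assume "prov L (Neg (Neg A))"
    then have "prov L A"
      by (rule prov_taut_consequence) simp
    with assms show False ..
  qed
  then obtain v where "peval v (Neg A)" and G: "truths v \<in> worlds"
    using consistent_satisfiable_in_world by blast
  then have "\<not> sat nbhd val (truths v) A"
    using truth_lemma[OF mem_subfms_self G] mem_subfms_self by simp
  with G have "\<not> valid_in worlds nbhd A"
    unfolding valid_in_def by blast
  moreover from G have "L_frame L worlds nbhd"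
    using L_frame_canonical by blast
  ultimately show ?thesis
    using finite_worlds by blast
qed

subsection \<open>Transport of frames along injections\<close>

definition image_frame :: "('a \<Rightarrow> 'b) \<Rightarrow> ('a \<Rightarrow> 'a set \<Rightarrow> bool) \<Rightarrow> 'b \<Rightarrow> 'b set \<Rightarrow> bool" where
  "image_frame f R b U \<longleftrightarrow> (\<exists>x V. R x V \<and> b = f x \<and> U = f ` V)"

lemma mn_frameD: "mn_frame W R \<Longrightarrow> R x V \<Longrightarrow> x \<in> W \<and> V \<noteq> {} \<and> V \<subseteq> W"
  unfolding mn_frame_def by blast

lemma image_Int_vimage_eq: "U \<subseteq> f ` W \<Longrightarrow> f ` (W \<inter> f -` U) = U"
  by blast

context
  fixes f :: "'a \<Rightarrow> 'b" and W :: "'a set" and R :: "'a \<Rightarrow> 'a set \<Rightarrow> bool"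
  assumes inj: "inj_on f W" and mn: "mn_frame W R"
begin

lemma image_frame_at: "x \<in> W \<Longrightarrow> image_frame f R (f x) U \<longleftrightarrow> (\<exists>V. R x V \<and> U = f ` V)"
  unfolding image_frame_def using mn_frameD[OF mn] inj by (metis inj_onD)

lemma sat_image_frame:
  "x \<in> W \<Longrightarrow> sat (image_frame f R) (\<lambda>n. f ` (Val n \<inter> W)) (f x) A \<longleftrightarrow> sat R Val x A"
proof (induction A arbitrary: x)
  case (Var n)
  then show ?case
    using inj by (simp add: inj_on_image_mem_iff)
next
  case (Box A)
  let ?Val' = "\<lambda>n. f ` (Val n \<inter> W)"
  have "sat (image_frame f R) ?Val' (f x) (Box A)
      \<longleftrightarrow> (\<forall>V. R x V \<longrightarrow> (\<exists>y\<in>V. sat (image_frame f R) ?Val' (f y) A))"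
    using image_frame_at[OF Box.prems] by auto
  also have "\<dots> \<longleftrightarrow> (\<forall>V. R x V \<longrightarrow> (\<exists>y\<in>V. sat R Val y A))"
    using mn_frameD[OF mn] Box.IH by blast
  finally show ?case
    by simp
qed simp_all

lemma image_frame_mono:
  assumes "image_frame f R b U" and "U \<subseteq> U'" and "U' \<subseteq> f ` W"
  shows "image_frame f R b U'"
proof -
  from assms(1) obtain x V where "R x V" "b = f x" "U = f ` V"
    unfolding image_frame_def by blast
  moreover from this assms(2) have "V \<subseteq> W \<inter> f -` U'"
    using mn_frameD[OF mn] by blast
  ultimately have "R x (W \<inter> f -` U')"
    using mn unfolding mn_frame_def by blast
  with \<open>b = f x\<close> assms(3) show ?thesis
    unfolding image_frame_def using image_Int_vimage_eq by blast
qed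

lemma mn_frame_image_frame: "mn_frame (f ` W) (image_frame f R)"
proof -
  have "f ` W \<noteq> {}"
    using mn unfolding mn_frame_def by blast
  moreover have "image_frame f R b U \<longrightarrow> b \<in> f ` W \<and> U \<noteq> {} \<and> U \<subseteq> f ` W" for b U
    using mn_frameD[OF mn] unfolding image_frame_def by blast
  ultimately show ?thesis
    unfolding mn_frame_def using image_frame_mono by blast
qed

lemma P_frame_image_frame: "P_frame W R \<Longrightarrow> P_frame (f ` W) (image_frame f R)"
  unfolding P_frame_def image_frame_def by blast

lemma D_frame_image_frame:
  assumes "D_frame W R"
  shows "D_frame (f ` W) (image_frame f R)"
  unfolding D_frame_def
proof (intro ballI allI impI)
  fix b U
  assume "b \<in> f ` W" and U: "U \<subseteq> f ` W"
  then obtain x where x: "x \<in> W" "b = f x"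
    by blast
  define V where "V = W \<inter> f -` U"
  have "f ` V = U"
    unfolding V_def using U by (rule image_Int_vimage_eq)
  moreover have "f ` (W - V) = f ` W - U"
    using inj_on_image_set_diff[OF inj] \<open>f ` V = U\<close> unfolding V_def by blast
  moreover have "R x V \<or> R x (W - V)"
    using assms x unfolding D_frame_def V_def by blast
  ultimately show "image_frame f R b U \<or> image_frame f R b (f ` W - U)"
    using x unfolding image_frame_def by metis
qed

lemma transitive_frame_image_frame:
  assumes trans: "transitive_frame W R"
  shows "transitive_frame (f ` W) (image_frame f R)"
  unfolding transitive_frame_def
proof (intro allI impI)
  fix b U Us
  assume "image_frame f R b U \<and> (\<forall>c\<in>U. image_frame f R c (Us c))"
  then obtain x V where "R x V" "b = f x" "U = f ` V" and Us: "\<forall>c\<in>U. image_frame f R c (Us c)"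
    unfolding image_frame_def by blast
  have "\<forall>y\<in>V. \<exists>V'. R y V' \<and> Us (f y) = f ` V'"
    using Us \<open>U = f ` V\<close> \<open>R x V\<close> mn_frameD[OF mn] image_frame_at by blast
  then obtain g where g: "\<forall>y\<in>V. R y (g y) \<and> Us (f y) = f ` g y"
    by metis
  with trans \<open>R x V\<close> have "R x (\<Union>y\<in>V. g y)"
    unfolding transitive_frame_def by blast
  moreover have "f ` (\<Union>y\<in>V. g y) = (\<Union>c\<in>U. Us c)"
    using g \<open>U = f ` V\<close> by (simp add: image_UN)
  ultimately show "image_frame f R b (\<Union>c\<in>U. Us c)"
    using \<open>b = f x\<close> unfolding image_frame_def by metis
qed

end

lemma L_frame_image_frame:
  assumes "inj_on f W" and "L_frame L W R"
  shows "L_frame L (f ` W) (image_frame f R)"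
proof -
  have mn: "mn_frame W R"
    using assms(2) unfolding L_frame_def by blast
  show ?thesis
    using assms(2) mn_frame_image_frame[OF assms(1) mn] P_frame_image_frame[OF assms(1) mn]
      D_frame_image_frame[OF assms(1) mn] transitive_frame_image_frame[OF assms(1) mn]
    unfolding L_frame_def by blast
qed

lemma valid_in_image_frameD:
  assumes "inj_on f W" and "mn_frame W R" and valid: "valid_in (f ` W) (image_frame f R) A"
  shows "valid_in W R A"
  unfolding valid_in_def
proof (intro allI ballI)
  fix Val x
  assume "x \<in> W"
  with valid have "sat (image_frame f R) (\<lambda>n. f ` (Val n \<inter> W)) (f x) A"
    unfolding valid_in_def by blast
  with sat_image_frame[OF assms(1,2) \<open>x \<in> W\<close>] show "sat R Val x A"
    by blast
qed

lemma finite_inj_into_infinite: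
  assumes "finite A" and "infinite (UNIV :: 'b set)"
  shows "\<exists>f :: 'a \<Rightarrow> 'b. inj_on f A"
proof -
  obtain h :: "'a \<Rightarrow> nat" where "inj_on h A"
    using finite_imp_inj_to_nat_seg[OF assms(1)] by blast
  moreover obtain g :: "nat \<Rightarrow> 'b" where "inj g"
    using infinite_countable_subset[OF assms(2)] by blast
  ultimately have "inj_on (g \<circ> h) A"
    by (simp add: comp_inj_on inj_on_subset)
  then show ?thesis
    by blast
qed

lemma finite_countermodel_in_infinite_type:
  assumes "infinite (UNIV :: 'w set)" and "\<not> prov L A"
  shows "\<exists>(W :: 'w set) R. L_frame L W R \<and> finite W \<and> \<not> valid_in W R A"
proof -
  obtain W :: "fm set set" and R where L: "L_frame L W R" and "finite W" "\<not> valid_in W R A"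
    using finite_countermodel[OF assms(2)] by blast
  moreover obtain f :: "fm set \<Rightarrow> 'w" where f: "inj_on f W"
    using finite_inj_into_infinite[OF \<open>finite W\<close> assms(1)] by blast
  moreover have "mn_frame W R"
    using L unfolding L_frame_def by blast
  ultimately have "L_frame L (f ` W) (image_frame f R)" and "finite (f ` W)"
    and "\<not> valid_in (f ` W) (image_frame f R) A"
    using L_frame_image_frame valid_in_image_frameD by blast+
  then show ?thesis
    by blast
qed

theorem theorem3p5:
  fixes L :: logic and A :: fm
  assumes "infinite (UNIV :: 'w set)"
  shows "(prov L A \<longleftrightarrow> (\<forall>(W :: 'w set) R. L_frame L W R \<longrightarrow> valid_in W R A))
       \<and> (prov L A \<longleftrightarrow> (\<forall>(W :: 'w set) R. L_frame L W R \<and> finite W \<longrightarrow> valid_in W R A))"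
  using soundness finite_countermodel_in_infinite_type[OF assms, of L A] by blast

end
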